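(* Let $\mathfrak g$ be a Lie algebra over $\mathbb F$ ($\mathbb F=\mathbb R$ or $\mathbb C$) with center $\mathfrak z(\mathfrak g)$, let $c\in\mathbb F$, let $R$ be a linear endomorphism of $\mathfrak g$, and let $\mathcal R$ be the endomorphism of $\mathfrak g\times\mathfrak g$ defined by $\mathcal R(x,y)=\big(R(x-y)+cy,\;R(x-y)+cx\big)$. Then $\mathcal R$ is an $R$-matrix of the Lie algebra $\mathfrak g\times\mathfrak g$ (with componentwise bracket) if and only if $$B_R(x,y)+c^2[x,y]\in\mathfrak z(\mathfrak g)\qquad\text{for all }x,y\in\mathfrak g.$$ In particular, if $\mathfrak g$ is a complex semisimple Lie algebra, $\mathcal R$ is an $R$-matrix of $\mathfrak g\times\mathfrak g$ if and only if $R$ satisfies the modified classical Yang–Baxter equation of constant $c$.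
   Context: For a Lie algebra $\mathfrak a$ and a linear endomorphism $S$ of $\mathfrak a$, put $[x,y]_S=\tfrac12([Sx,y]+[x,Sy])$ and $B_S(x,y)=[Sx,Sy]-S([Sx,y]+[x,Sy])$. $S$ is called an $R$-matrix of $\mathfrak a$ if $[\cdot,\cdot]_S$ is a Lie bracket on $\mathfrak a$. $S$ satisfies the modified classical Yang–Baxter equation (mCYBE) of constant $c$ if $B_S(x,y)=-c^2[x,y]$ for all $x,y\in\mathfrak a$. The Lie algebra $\mathfrak g\times\mathfrak g$ carries the bracket $[(x,y),(z,s)]=([x,z],[y,s])$. *)

theory Defs
  imports Complex_Main "HOL-Library.Product_Plus"
begin

definition lie_algebra :: "('k::field \<Rightarrow> 'a::ab_group_add \<Rightarrow> 'a) \<Rightarrow> ('a \<Rightarrow> 'a \<Rightarrow> 'a) \<Rightarrow> bool" where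
  "lie_algebra scale br \<longleftrightarrow>
     Vector_Spaces.vector_space scale \<and>
     (\<forall>y. Vector_Spaces.linear scale scale (\<lambda>x. br x y)) \<and>
     (\<forall>x. Vector_Spaces.linear scale scale (\<lambda>y. br x y)) \<and>
     (\<forall>x. br x x = 0) \<and>
     (\<forall>x y z. br x (br y z) + br y (br z x) + br z (br x y) = 0)"

definition lie_center :: "('a::ab_group_add \<Rightarrow> 'a \<Rightarrow> 'a) \<Rightarrow> 'a set" where
  "lie_center br = {z. \<forall>x. br z x = 0}"

definition bracketS :: "('k::field \<Rightarrow> 'a::ab_group_add \<Rightarrow> 'a) \<Rightarrow> ('a \<Rightarrow> 'a \<Rightarrow> 'a) \<Rightarrow> ('a \<Rightarrow> 'a) \<Rightarrow> 'a \<Rightarrow> 'a \<Rightarrow> 'a" where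
  "bracketS scale br S x y = scale (1/2) (br (S x) y + br x (S y))"

definition BS :: "('a::ab_group_add \<Rightarrow> 'a \<Rightarrow> 'a) \<Rightarrow> ('a \<Rightarrow> 'a) \<Rightarrow> 'a \<Rightarrow> 'a \<Rightarrow> 'a" where
  "BS br S x y = br (S x) (S y) - S (br (S x) y + br x (S y))"

definition is_R_matrix :: "('k::field \<Rightarrow> 'a::ab_group_add \<Rightarrow> 'a) \<Rightarrow> ('a \<Rightarrow> 'a \<Rightarrow> 'a) \<Rightarrow> ('a \<Rightarrow> 'a) \<Rightarrow> bool" where
  "is_R_matrix scale br S \<longleftrightarrow> lie_algebra scale (bracketS scale br S)"

definition mCYBE :: "('k::field \<Rightarrow> 'a::ab_group_add \<Rightarrow> 'a) \<Rightarrow> ('a \<Rightarrow> 'a \<Rightarrow> 'a) \<Rightarrow> ('a \<Rightarrow> 'a) \<Rightarrow> 'k \<Rightarrow> bool" where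
  "mCYBE scale br S c \<longleftrightarrow> (\<forall>x y. BS br S x y = scale (- (c^2)) (br x y))"

definition prod_scale :: "('k \<Rightarrow> 'a \<Rightarrow> 'a) \<Rightarrow> 'k \<Rightarrow> 'a \<times> 'a \<Rightarrow> 'a \<times> 'a" where
  "prod_scale scale a p = (scale a (fst p), scale a (snd p))"

definition prod_br :: "('a \<Rightarrow> 'a \<Rightarrow> 'a) \<Rightarrow> 'a \<times> 'a \<Rightarrow> 'a \<times> 'a \<Rightarrow> 'a \<times> 'a" where
  "prod_br br p q = (br (fst p) (fst q), br (snd p) (snd q))"

definition calR :: "('k \<Rightarrow> 'a::ab_group_add \<Rightarrow> 'a) \<Rightarrow> ('a \<Rightarrow> 'a) \<Rightarrow> 'k \<Rightarrow> 'a \<times> 'a \<Rightarrow> 'a \<times> 'a" where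
  "calR scale R c p = (R (fst p - snd p) + scale c (snd p), R (fst p - snd p) + scale c (fst p))"

definition lie_ideal :: "('k::field \<Rightarrow> 'a::ab_group_add \<Rightarrow> 'a) \<Rightarrow> ('a \<Rightarrow> 'a \<Rightarrow> 'a) \<Rightarrow> 'a set \<Rightarrow> bool" where
  "lie_ideal scale br I \<longleftrightarrow> module.subspace scale I \<and> (\<forall>x y. y \<in> I \<longrightarrow> br x y \<in> I)"

fun derived_series :: "('k::field \<Rightarrow> 'a::ab_group_add \<Rightarrow> 'a) \<Rightarrow> ('a \<Rightarrow> 'a \<Rightarrow> 'a) \<Rightarrow> 'a set \<Rightarrow> nat \<Rightarrow> 'a set" where
  "derived_series scale br I 0 = I"
| "derived_series scale br I (Suc n) =
     module.span scale {br x y | x y. x \<in> derived_series scale br I n \<and> y \<in> derived_series scale br I n}"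

definition lie_solvable :: "('k::field \<Rightarrow> 'a::ab_group_add \<Rightarrow> 'a) \<Rightarrow> ('a \<Rightarrow> 'a \<Rightarrow> 'a) \<Rightarrow> 'a set \<Rightarrow> bool" where
  "lie_solvable scale br I \<longleftrightarrow> (\<exists>n. derived_series scale br I n = {0})"

definition semisimple :: "('k::field \<Rightarrow> 'a::ab_group_add \<Rightarrow> 'a) \<Rightarrow> ('a \<Rightarrow> 'a \<Rightarrow> 'a) \<Rightarrow> bool" where
  "semisimple scale br \<longleftrightarrow> lie_algebra scale br \<and>
     (\<exists>B. finite B \<and> module.span scale B = UNIV) \<and>
     (\<forall>I. lie_ideal scale br I \<and> lie_solvable scale br I \<longrightarrow> I = {0})"

end

theory Submission
  imports Defs
begin

text \<open>
  For a linear endomorphism S of a Lie algebra over a field of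
  characteristic 0, the bracket [x,y]_S is automatically bilinear and alternating,
  and a direct expansion using the Jacobi identity gives
    4 (cyclic sum of [[x,y]_S,z]_S) = - (cyclic sum of [B_S(x,y),z]).
  Hence S is an R-matrix iff the cyclic sum of [B_S(x,y),z] vanishes identically
  (lemma rmatrix_iff_jacobiator_BS).  We apply this criterion to the Lie algebra
  g x g and S = calR.  Writing D(a,b) = B_R(a,b) + c^2 [a,b], each component of
  B_calR((x1,x2),(y1,y2)) is D(x1-x2,y1-y2) minus c^2 times the bracket of the
  components; the latter terms cancel in the cyclic sum by the Jacobi identity,
  which leaves a sum of brackets [D(.,.), z_i].  This vanishes for all arguments
  iff every D(x,y) is central (lemma rmatrix_calR_iff_central).  Finally, the
  center of a semisimple Lie algebra is an abelian, hence solvable, ideal and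
  is therefore zero, so centrality of D(x,y) becomes the mCYBE.
\<close>

definition jacobiator :: "('a::ab_group_add \<Rightarrow> 'a \<Rightarrow> 'a) \<Rightarrow> ('a \<Rightarrow> 'a \<Rightarrow> 'a) \<Rightarrow> 'a \<Rightarrow> 'a \<Rightarrow> 'a \<Rightarrow> 'a" where
  "jacobiator br f x y z = br (f x y) z + br (f y z) x + br (f z x) y"

locale lie_alg = vector_space scale for scale :: "'k::field_char_0 \<Rightarrow> 'a::ab_group_add \<Rightarrow> 'a" +
  fixes br :: "'a \<Rightarrow> 'a \<Rightarrow> 'a"
  assumes add_left: "br (a + b) y = br a y + br b y"
    and scale_left: "br (scale r a) y = scale r (br a y)"
    and add_right: "br x (a + b) = br x a + br x b"
    and scale_right: "br x (scale r b) = scale r (br x b)"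
    and alternating: "br x x = 0"
    and jacobi: "br x (br y z) + br y (br z x) + br z (br x y) = 0"

lemma lie_algebra_iff_lie_alg: "lie_algebra scale br \<longleftrightarrow> lie_alg scale br"
  unfolding lie_algebra_def lie_alg_def lie_alg_axioms_def Vector_Spaces.linear_iff by auto

lemma linear_iff_additive_homogeneous:
  "Vector_Spaces.linear scale scale S \<longleftrightarrow> vector_space scale \<and>
     (\<forall>x y. S (x + y) = S x + S y) \<and> (\<forall>r x. S (scale r x) = scale r (S x))"
  unfolding Vector_Spaces.linear_iff by auto

context lie_alg
begin

lemma zero_left [simp]: "br 0 y = 0"
  using add_left[of 0 0 y] by simp

lemma zero_right [simp]: "br x 0 = 0"
  using add_right[of x 0 0] by simp

lemma neg_left: "br (- a) y = - br a y"
  using scale_left[of "-1" a y] by (simp only: scale_minus_left scale_one)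

lemma neg_right: "br x (- a) = - br x a"
  using scale_right[of x "-1" a] by (simp only: scale_minus_left scale_one)

lemma diff_left: "br (a - b) y = br a y - br b y"
  by (simp only: diff_conv_add_uminus add_left neg_left)

lemma diff_right: "br x (a - b) = br x a - br x b"
  by (simp only: diff_conv_add_uminus add_right neg_right)

lemmas bilinear = add_left scale_left add_right scale_right neg_left neg_right diff_left diff_right

lemma antisym: "br a b = - br b a"
proof -
  have "br a a + br b a + (br a b + br b b) = 0"
    using alternating[of "a + b"] unfolding add_left add_right .
  then have "br a b + br b a = 0" by (simp add: alternating add.commute)
  then show ?thesis by (simp add: eq_neg_iff_add_eq_0)
qed

lemma jacobiator_br: "jacobiator br br a b c = 0"
proof -
  have "- (br c (br a b) + br a (br b c) + br b (br c a)) = 0"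
    using jacobi[of c a b] by simp
  then show ?thesis
    unfolding jacobiator_def
    using antisym[of c "br a b"] antisym[of a "br b c"] antisym[of b "br c a"]
    by (simp add: algebra_simps)
qed

lemma jacobiator_scaled_br: "jacobiator br (\<lambda>x y. scale r (br x y)) a b c = 0"
proof -
  have "jacobiator br (\<lambda>x y. scale r (br x y)) a b c = scale r (jacobiator br br a b c)"
    by (simp only: jacobiator_def scale_left scale_right_distrib)
  then show ?thesis by (simp add: jacobiator_br)
qed

lemma center_is_ideal: "lie_ideal scale br (lie_center br)"
proof -
  have "subspace (lie_center br)"
    unfolding subspace_def lie_center_def by (simp add: add_left scale_left)
  moreover have "br x z \<in> lie_center br" if "z \<in> lie_center br" for x z
    using that antisym[of x z] unfolding lie_center_def by simp
  ultimately show ?thesis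
    unfolding lie_ideal_def by blast
qed

lemma center_solvable: "lie_solvable scale br (lie_center br)"
proof -
  have "{br x y | x y. x \<in> lie_center br \<and> y \<in> lie_center br} = {0}"
    by (auto simp: lie_center_def intro!: exI[of _ 0])
  then have "derived_series scale br (lie_center br) 1 = {0}"
    by (simp add: span_empty)
  then show ?thesis unfolding lie_solvable_def by blast
qed

context
  fixes S :: "'a \<Rightarrow> 'a"
  assumes S_linear: "Vector_Spaces.linear scale scale S"
begin

lemma S_add: "S (x + y) = S x + S y"
  and S_scale: "S (scale r x) = scale r (S x)"
  using S_linear unfolding linear_iff_additive_homogeneous by auto

lemma bracketS_bilinear:
  "(\<forall>y. Vector_Spaces.linear scale scale (\<lambda>x. bracketS scale br S x y)) \<and>
   (\<forall>x. Vector_Spaces.linear scale scale (\<lambda>y. bracketS scale br S x y))"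
  unfolding Vector_Spaces.linear_iff bracketS_def using vector_space_axioms
  by (simp add: S_add S_scale bilinear scale_right_distrib algebra_simps)

lemma bracketS_alternating: "bracketS scale br S x x = 0"
  unfolding bracketS_def using antisym[of x "S x"] by simp

lemma bracketS_antisym: "bracketS scale br S a b = - bracketS scale br S b a"
proof -
  have "br (S a) b + br a (S b) = - (br (S b) a + br b (S a))"
    using antisym[of "S a" b] antisym[of a "S b"] by (simp add: algebra_simps)
  then show ?thesis by (simp only: bracketS_def scale_minus_right)
qed

text \<open>The terms [[Sx,Sy],z] etc. introduced by B_S combine
  with the expansion of [[x,y]_S,z]_S into three instances of Jacobi.\<close>
lemma jacobiator_bracketS:
  "jacobiator (bracketS scale br S) (bracketS scale br S) x y z =
     - scale (1/4) (jacobiator br (BS br S) x y z)"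
proof -
  define Q where "Q a b = br (S a) b + br a (S b)" for a b
  have double: "bracketS scale br S (bracketS scale br S a b) d
      = scale (1/4) (br (S (Q a b)) d + br (br (S a) b) (S d) + br (br a (S b)) (S d))" for a b d
    unfolding bracketS_def Q_def
    by (simp add: S_add S_scale bilinear scale_right_distrib add.assoc)
  have BS_Q: "br (BS br S a b) d = br (br (S a) (S b)) d - br (S (Q a b)) d" for a b d
    by (simp only: BS_def Q_def diff_left)
  have "(br (S (Q x y)) z + br (br (S x) y) (S z) + br (br x (S y)) (S z))
     + (br (S (Q y z)) x + br (br (S y) z) (S x) + br (br y (S z)) (S x))
     + (br (S (Q z x)) y + br (br (S z) x) (S y) + br (br z (S x)) (S y))
     + jacobiator br (BS br S) x y z
     = jacobiator br br (S x) (S y) z + jacobiator br br (S y) (S z) x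
       + jacobiator br br (S z) (S x) y" (is "?A + ?B + ?C + _ = _")
    unfolding jacobiator_def BS_Q by (simp add: algebra_simps)
  then have expanded: "?A + ?B + ?C = - jacobiator br (BS br S) x y z"
    by (simp add: jacobiator_br eq_neg_iff_add_eq_0)
  have "jacobiator (bracketS scale br S) (bracketS scale br S) x y z = scale (1/4) (?A + ?B + ?C)"
    unfolding jacobiator_def double by (simp only: scale_right_distrib)
  also have "\<dots> = - scale (1/4) (jacobiator br (BS br S) x y z)"
    by (simp only: expanded scale_minus_right)
  finally show ?thesis .
qed

lemma rmatrix_iff_jacobiator_BS:
  "is_R_matrix scale br S \<longleftrightarrow> (\<forall>x y z. jacobiator br (BS br S) x y z = 0)"
proof -
  have jacobi_S: "bracketS scale br S x (bracketS scale br S y z)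
        + bracketS scale br S y (bracketS scale br S z x)
        + bracketS scale br S z (bracketS scale br S x y)
      = scale (1/4) (jacobiator br (BS br S) x y z)" for x y z
  proof -
    have "bracketS scale br S x (bracketS scale br S y z)
        + bracketS scale br S y (bracketS scale br S z x)
        + bracketS scale br S z (bracketS scale br S x y)
      = - jacobiator (bracketS scale br S) (bracketS scale br S) x y z"
      using bracketS_antisym[of x "bracketS scale br S y z"]
        bracketS_antisym[of y "bracketS scale br S z x"]
        bracketS_antisym[of z "bracketS scale br S x y"]
      unfolding jacobiator_def by (simp add: algebra_simps)
    then show ?thesis by (simp only: jacobiator_bracketS minus_minus)
  qed
  have "scale (1/4) v = 0 \<longleftrightarrow> v = 0" for v
    by simp
  then show ?thesis
    unfolding is_R_matrix_def lie_algebra_def jacobi_S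
    using vector_space_axioms bracketS_bilinear bracketS_alternating by blast
qed

end

end

lemma semisimple_center_trivial:
  fixes scale :: "'k::field_char_0 \<Rightarrow> 'a::ab_group_add \<Rightarrow> 'a"
  assumes "semisimple scale br"
  shows "lie_center br = {0}"
proof -
  interpret lie_alg scale br
    using assms unfolding semisimple_def lie_algebra_iff_lie_alg by blast
  show ?thesis
    using assms center_is_ideal center_solvable unfolding semisimple_def by blast
qed

lemma (in lie_alg) lie_alg_prod: "lie_alg (prod_scale scale) (prod_br br)"
proof -
  have "vector_space (prod_scale scale)"
    unfolding vector_space_def prod_scale_def
    by (auto simp: prod_eq_iff scale_right_distrib scale_left_distrib)
  then show ?thesis
    unfolding lie_alg_def lie_alg_axioms_def
    by (auto simp: prod_eq_iff prod_br_def prod_scale_def bilinear alternating jacobi)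
qed

context lie_alg
begin

context
  fixes R :: "'a \<Rightarrow> 'a" and c :: 'k
  assumes R_linear: "Vector_Spaces.linear scale scale R"
begin

definition defect :: "'a \<Rightarrow> 'a \<Rightarrow> 'a" where
  "defect a b = BS br R a b + scale (c^2) (br a b)"

lemma R_add: "R (x + y) = R x + R y"
  and R_scale: "R (scale r x) = scale r (R x)"
  using R_linear unfolding linear_iff_additive_homogeneous by auto

lemma R_diff: "R (x - y) = R x - R y"
proof -
  have "R (- y) = - R y"
    using R_scale[of "-1" y] by (simp only: scale_minus_left scale_one)
  then show ?thesis by (simp only: diff_conv_add_uminus R_add)
qed

lemma calR_linear:
  "Vector_Spaces.linear (prod_scale scale) (prod_scale scale) (calR scale R c)"
  unfolding linear_iff_additive_homogeneous
  using lie_alg.axioms(1)[OF lie_alg_prod]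
  by (simp add: calR_def prod_scale_def prod_eq_iff R_add R_diff R_scale
      scale_right_distrib scale_right_diff_distrib algebra_simps)

lemma BS_calR:
  "BS (prod_br br) (calR scale R c) (x1, x2) (y1, y2) =
     (defect (x1 - x2) (y1 - y2) - scale (c^2) (br x1 y1),
      defect (x1 - x2) (y1 - y2) - scale (c^2) (br x2 y2))"
  unfolding BS_def calR_def prod_br_def defect_def
  by (simp add: prod_eq_iff R_add R_diff R_scale bilinear power2_eq_square
      scale_right_distrib scale_right_diff_distrib algebra_simps)

text \<open>In the Jacobiator of B_calR the c^2-correction terms cancel by Jacobi.\<close>
lemma jacobiator_BS_calR:
  "jacobiator (prod_br br) (BS (prod_br br) (calR scale R c)) (x1, x2) (y1, y2) (z1, z2) =
     (br (defect (x1 - x2) (y1 - y2)) z1 + br (defect (y1 - y2) (z1 - z2)) x1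
        + br (defect (z1 - z2) (x1 - x2)) y1,
      br (defect (x1 - x2) (y1 - y2)) z2 + br (defect (y1 - y2) (z1 - z2)) x2
        + br (defect (z1 - z2) (x1 - x2)) y2)"
proof -
  have "jacobiator br (\<lambda>a b. scale (c^2) (br a b)) u v w = 0" for u v w
    by (rule jacobiator_scaled_br)
  then show ?thesis
    unfolding jacobiator_def BS_calR prod_br_def
    by (simp add: diff_left algebra_simps)
qed

lemma rmatrix_calR_iff_central:
  "is_R_matrix (prod_scale scale) (prod_br br) (calR scale R c) \<longleftrightarrow>
     (\<forall>x y. defect x y \<in> lie_center br)"
proof -
  have "is_R_matrix (prod_scale scale) (prod_br br) (calR scale R c) \<longleftrightarrow>
    (\<forall>X Y Z. jacobiator (prod_br br) (BS (prod_br br) (calR scale R c)) X Y Z = 0)"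
    by (rule lie_alg.rmatrix_iff_jacobiator_BS[OF lie_alg_prod calR_linear])
  also have "\<dots> \<longleftrightarrow> (\<forall>x y. defect x y \<in> lie_center br)"
  proof
    assume vanish: "\<forall>X Y Z. jacobiator (prod_br br) (BS (prod_br br) (calR scale R c)) X Y Z = 0"
    have "br (defect x y) z = 0" for x y z
      using vanish[rule_format, of "(x, 0)" "(y, 0)" "(0, z)"]
      by (simp add: jacobiator_BS_calR prod_eq_iff)
    then show "\<forall>x y. defect x y \<in> lie_center br"
      unfolding lie_center_def by blast
  next
    assume "\<forall>x y. defect x y \<in> lie_center br"
    then have "br (defect x y) z = 0" for x y z
      unfolding lie_center_def by blast
    then show "\<forall>X Y Z. jacobiator (prod_br br) (BS (prod_br br) (calR scale R c)) X Y Z = 0"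
      by (simp add: jacobiator_BS_calR split_paired_all zero_prod_def)
  qed
  finally show ?thesis .
qed

end

end

lemma rmatrix_calR_iff:
  fixes scale :: "'k::field_char_0 \<Rightarrow> 'a::ab_group_add \<Rightarrow> 'a"
  assumes "lie_algebra scale br" and "Vector_Spaces.linear scale scale R"
  shows "is_R_matrix (prod_scale scale) (prod_br br) (calR scale R c) \<longleftrightarrow>
     (\<forall>x y. BS br R x y + scale (c^2) (br x y) \<in> lie_center br)"
proof -
  interpret lie_alg scale br
    using assms(1) unfolding lie_algebra_iff_lie_alg .
  show ?thesis
    using rmatrix_calR_iff_central[OF assms(2)] unfolding defect_def[OF assms(2)] .
qed

lemma rmatrix_calR_iff_mCYBE:
  fixes scale :: "'k::field_char_0 \<Rightarrow> 'a::ab_group_add \<Rightarrow> 'a"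
  assumes "semisimple scale br" and "Vector_Spaces.linear scale scale R"
  shows "is_R_matrix (prod_scale scale) (prod_br br) (calR scale R c) \<longleftrightarrow> mCYBE scale br R c"
proof -
  have la: "lie_algebra scale br"
    using assms(1) unfolding semisimple_def by blast
  then interpret lie_alg scale br
    unfolding lie_algebra_iff_lie_alg .
  have "BS br R x y + scale (c^2) (br x y) \<in> lie_center br \<longleftrightarrow>
        BS br R x y = scale (- (c^2)) (br x y)" for x y
    unfolding semisimple_center_trivial[OF assms(1)] by (simp add: eq_neg_iff_add_eq_0)
  then show ?thesis
    unfolding mCYBE_def rmatrix_calR_iff[OF la assms(2)] by blast
qed

theorem proposition2p1:
  shows "(\<forall>(scale :: real \<Rightarrow> 'a::ab_group_add \<Rightarrow> 'a) br R c.
            lie_algebra scale br \<longrightarrow> Vector_Spaces.linear scale scale R \<longrightarrow>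
            (is_R_matrix (prod_scale scale) (prod_br br) (calR scale R c) \<longleftrightarrow>
             (\<forall>x y. BS br R x y + scale (c^2) (br x y) \<in> lie_center br)))
       \<and> (\<forall>(scale :: complex \<Rightarrow> 'b::ab_group_add \<Rightarrow> 'b) br R c.
            lie_algebra scale br \<longrightarrow> Vector_Spaces.linear scale scale R \<longrightarrow>
            (is_R_matrix (prod_scale scale) (prod_br br) (calR scale R c) \<longleftrightarrow>
             (\<forall>x y. BS br R x y + scale (c^2) (br x y) \<in> lie_center br)))
       \<and> (\<forall>(scale :: complex \<Rightarrow> 'c::ab_group_add \<Rightarrow> 'c) br R c.
            semisimple scale br \<longrightarrow> Vector_Spaces.linear scale scale R \<longrightarrow>
            (is_R_matrix (prod_scale scale) (prod_br br) (calR scale R c) \<longleftrightarrow>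
             mCYBE scale br R c))"
  by (intro conjI allI impI rmatrix_calR_iff rmatrix_calR_iff_mCYBE)

end
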